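(* For any field $K$ there is a Bruhat decomposition $$G_{m\wr d}=\bigsqcup_{w\in\Sigma_m\wr\Sigma_d}B_m^d\,w\,B_m^d$$ (disjoint union).
   Context: $\Sigma_m\wr\Sigma_d=\Sigma_m^d\rtimes\Sigma_d$ with multiplication $w(g_1,\dots,g_d)=(g_{w^{-1}(1)},\dots,g_{w^{-1}(d)})w$, regarded as a subgroup of $\Sigma_{md}$ via $(w_i)_i\sigma:(j-1)m+a\mapsto(\sigma(j)-1)m+w_{\sigma(j)}(a)$. Over $K$: $B_m\subseteq\mathrm{GL}_m(K)$ upper triangular matrices; $N_{m\wr d}\subseteq\mathrm{GL}_{md}(K)$ monomial matrices whose underlying permutation lies in $\Sigma_m\wr\Sigma_d$; $B_m^d$ block diagonal matrices $\mathrm{diag}(b_1,\dots,b_d)$, $b_i\in B_m$; $G_{m\wr d}=\langle B_m^d,N_{m\wr d}\rangle$. An element $w\in\Sigma_m\wr\Sigma_d$ stands for any monomial matrix in $N_{m\wr d}$ with underlying permutation $w$ (the double coset $B_m^dwB_m^d$ is independent of the choice). *)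

theory Defs
  imports "Jordan_Normal_Form.Matrix" "HOL-Combinatorics.Permutations"
begin

text \<open>Indices are 0-based: position j*m + a (j < d, a < m) corresponds to the
paper's (j+1-1)m + (a+1).\<close>

definition wreath_perm :: "nat \<Rightarrow> nat \<Rightarrow> (nat \<Rightarrow> nat \<Rightarrow> nat) \<Rightarrow> (nat \<Rightarrow> nat) \<Rightarrow> nat \<Rightarrow> nat" where
  "wreath_perm m d ws \<sigma> x =
     (if x < m * d then \<sigma> (x div m) * m + ws (\<sigma> (x div m)) (x mod m) else x)"

definition wreath :: "nat \<Rightarrow> nat \<Rightarrow> (nat \<Rightarrow> nat) set" where
  "wreath m d = {wreath_perm m d ws \<sigma> | ws \<sigma>.
      \<sigma> permutes {..<d} \<and> (\<forall>i<d. ws i permutes {..<m})}"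

definition monomial_mat :: "nat \<Rightarrow> (nat \<Rightarrow> nat) \<Rightarrow> 'a::field mat \<Rightarrow> bool" where
  "monomial_mat n p M \<longleftrightarrow> M \<in> carrier_mat n n \<and>
     (\<forall>i<n. \<forall>j<n. M $$ (i, j) \<noteq> 0 \<longleftrightarrow> i = p j)"

definition N_wr :: "nat \<Rightarrow> nat \<Rightarrow> 'a::field mat set" where
  "N_wr m d = {M. \<exists>w \<in> wreath m d. monomial_mat (m * d) w M}"

definition B_blocks :: "nat \<Rightarrow> nat \<Rightarrow> 'a::field mat set" where
  "B_blocks m d = {M. M \<in> carrier_mat (m * d) (m * d) \<and> invertible_mat M \<and>
     (\<forall>i<m*d. \<forall>j<m*d. M $$ (i, j) \<noteq> 0 \<longrightarrow> i div m = j div m \<and> i \<le> j)}"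

inductive_set gen_group :: "nat \<Rightarrow> 'a::field mat set \<Rightarrow> 'a mat set"
  for n :: nat and S :: "'a mat set" where
  one: "1\<^sub>m n \<in> gen_group n S"
| gen: "A \<in> S \<Longrightarrow> A \<in> gen_group n S"
| mult: "A \<in> gen_group n S \<Longrightarrow> B \<in> gen_group n S \<Longrightarrow> A * B \<in> gen_group n S"
| inv: "A \<in> gen_group n S \<Longrightarrow> B \<in> carrier_mat n n \<Longrightarrow> A * B = 1\<^sub>m n \<Longrightarrow> B * A = 1\<^sub>m n
        \<Longrightarrow> B \<in> gen_group n S"

definition G_wr :: "nat \<Rightarrow> nat \<Rightarrow> 'a::field mat set" where
  "G_wr m d = gen_group (m * d) (B_blocks m d \<union> N_wr m d)"

text \<open>Double coset B_m^d w B_m^d (union over all monomial representatives of w,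
which is the same set since the double coset does not depend on the choice).\<close>
definition double_coset :: "nat \<Rightarrow> nat \<Rightarrow> (nat \<Rightarrow> nat) \<Rightarrow> 'a::field mat set" where
  "double_coset m d w = {b1 * M * b2 | b1 M b2.
      b1 \<in> B_blocks m d \<and> b2 \<in> B_blocks m d \<and> monomial_mat (m * d) w M}"

end

theory Submission
  imports Defs "Jordan_Normal_Form.Determinant"
begin

text \<open>
  The generators of G_{m wr d} and their inverses are invertible matrices whose nonzero entries
  respect a permutation of the d diagonal blocks of size m, and these matrices form a group.
  Such a matrix is reduced to a monomial matrix by Gaussian elimination, column by column from
  the left, taking the lowest nonzero entry of the column as pivot: the pivot row clears the
  entries above it and the pivot column clears the entries to its right. The block pattern keeps
  both operations inside a single diagonal block, so they lie in B_m^d, and it forces the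
  resulting permutation into Sigma_m wr Sigma_d. For disjointness, P M = M' Q with P, Q in B_m^d
  and M, M' monomial for w, w' gives, from the nonzero entry of M in column j, some k <= j with
  w' k = w j; induction on j yields w = w'.
\<close>

lemma sum_eq_single:
  assumes "finite A" "a \<in> A" "\<And>x. x \<in> A \<Longrightarrow> x \<noteq> a \<Longrightarrow> f x = 0"
  shows "sum f A = f a"
  using sum.mono_neutral_right[of A "{a}" f] assms by auto

lemma mat_mult_index_sum:
  assumes "A \<in> carrier_mat n n" "B \<in> carrier_mat n n" "i < n" "j < n"
  shows "(A * B) $$ (i, j) = (\<Sum>k<n. A $$ (i, k) * B $$ (k, j))"
  using assms by (auto simp: scalar_prod_def lessThan_atLeast0 intro!: sum.cong)

lemma mat_mult_index_nonzero_ex: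
  assumes "A \<in> carrier_mat n n" "B \<in> carrier_mat n n" "i < n" "j < n"
    and "(A * B) $$ (i, j) \<noteq> 0"
  shows "\<exists>k<n. A $$ (i, k) \<noteq> 0 \<and> B $$ (k, j) \<noteq> 0"
proof -
  have "(\<Sum>k<n. A $$ (i, k) * B $$ (k, j)) \<noteq> 0"
    using assms(5) mat_mult_index_sum[OF assms(1-4)] by simp
  then obtain k where "k < n" "A $$ (i, k) * B $$ (k, j) \<noteq> 0"
    by (meson lessThan_iff sum.not_neutral_contains_not_neutral)
  then show ?thesis by auto
qed

lemma invertible_mat_iff_right_inverse:
  assumes A: "(A :: 'a::field mat) \<in> carrier_mat n n"
  shows "invertible_mat A \<longleftrightarrow> (\<exists>B\<in>carrier_mat n n. A * B = 1\<^sub>m n)"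
proof
  assume "invertible_mat A"
  then obtain B where AB: "A * B = 1\<^sub>m n" and BA: "B * A = 1\<^sub>m (dim_row B)"
    using A unfolding invertible_mat_def inverts_mat_def by auto
  have "B \<in> carrier_mat n n"
    using AB BA A by (metis carrier_matD(2) carrier_matI index_mult_mat(2,3) index_one_mat(2,3))
  then show "\<exists>B\<in>carrier_mat n n. A * B = 1\<^sub>m n" using AB by blast
next
  assume "\<exists>B\<in>carrier_mat n n. A * B = 1\<^sub>m n"
  then obtain B where B: "B \<in> carrier_mat n n" and AB: "A * B = 1\<^sub>m n" by blast
  have BA: "B * A = 1\<^sub>m n" using mat_mult_left_right_inverse[OF A B AB] .
  show "invertible_mat A" unfolding invertible_mat_def inverts_mat_def
    using A B AB BA by (auto intro!: exI[of _ B])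
qed

lemma mat_mult_inverse_reverse:
  assumes A: "(A :: 'a::field mat) \<in> carrier_mat n n" and B: "B \<in> carrier_mat n n"
    and A': "A' \<in> carrier_mat n n" and B': "B' \<in> carrier_mat n n"
    and AA': "A * A' = 1\<^sub>m n" and BB': "B * B' = 1\<^sub>m n"
  shows "(A * B) * (B' * A') = 1\<^sub>m n"
proof -
  have "(A * B) * (B' * A') = A * (B * (B' * A'))"
    using A B A' B' by (simp add: assoc_mult_mat[of _ n n _ n _ n])
  also have "B * (B' * A') = (B * B') * A'"
    using assoc_mult_mat[OF B B' A'] by simp
  finally show ?thesis using A A' AA' BB' by simp
qed

lemma invertible_mat_mult:
  assumes A: "(A :: 'a::field mat) \<in> carrier_mat n n" and B: "B \<in> carrier_mat n n"
    and "invertible_mat A" "invertible_mat B"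
  shows "invertible_mat (A * B)"
proof -
  obtain A' where A': "A' \<in> carrier_mat n n" "A * A' = 1\<^sub>m n"
    using assms(3) unfolding invertible_mat_iff_right_inverse[OF A] by blast
  obtain B' where B': "B' \<in> carrier_mat n n" "B * B' = 1\<^sub>m n"
    using assms(4) unfolding invertible_mat_iff_right_inverse[OF B] by blast
  have "(A * B) * (B' * A') = 1\<^sub>m n"
    using mat_mult_inverse_reverse[OF A B A'(1) B'(1) A'(2) B'(2)] .
  moreover have "B' * A' \<in> carrier_mat n n" using A'(1) B'(1) by simp
  ultimately show ?thesis
    unfolding invertible_mat_iff_right_inverse[OF mult_carrier_mat[OF A B]] by blast
qed

lemma invertible_mat_col_nonzero:
  assumes C: "(C :: 'a::field mat) \<in> carrier_mat n n" and "invertible_mat C" and k: "k < n"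
  shows "\<exists>i<n. C $$ (i, k) \<noteq> 0"
proof -
  obtain B where B: "B \<in> carrier_mat n n" "C * B = 1\<^sub>m n"
    using assms(2) unfolding invertible_mat_iff_right_inverse[OF C] by blast
  have "B * C = 1\<^sub>m n" using mat_mult_left_right_inverse[OF C B] .
  then have "(B * C) $$ (k, k) \<noteq> 0" using k by simp
  then show ?thesis using mat_mult_index_nonzero_ex[OF B(1) C k k] by blast
qed

lemma monomial_mat_mult_index:
  assumes P: "P \<in> carrier_mat n n" and M: "monomial_mat n w M" and w: "w permutes {..<n}"
    and ij: "i < n" "j < n"
  shows "(P * M) $$ (i, j) = P $$ (i, w j) * M $$ (w j, j)"
proof -
  have M': "M \<in> carrier_mat n n" using M by (simp add: monomial_mat_def)
  have wj: "w j < n" using permutes_in_image[OF w] ij by simp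
  have "(P * M) $$ (i, j) = (\<Sum>k<n. P $$ (i, k) * M $$ (k, j))"
    using mat_mult_index_sum[OF P M' ij] .
  also have "\<dots> = P $$ (i, w j) * M $$ (w j, j)"
    by (rule sum_eq_single) (use M ij wj in \<open>auto simp: monomial_mat_def\<close>)
  finally show ?thesis .
qed

section \<open>Elementary row and column operations\<close>

definition row_add_mat :: "nat \<Rightarrow> nat \<Rightarrow> (nat \<Rightarrow> 'a) \<Rightarrow> 'a::field mat" where
  "row_add_mat n q a = mat n n (\<lambda>(i, l). (if i = l then 1 else 0) + (if l = q then a i else 0))"

definition col_add_mat :: "nat \<Rightarrow> nat \<Rightarrow> (nat \<Rightarrow> 'a) \<Rightarrow> 'a::field mat" where
  "col_add_mat n q b = mat n n (\<lambda>(i, l). (if i = l then 1 else 0) + (if i = q then b l else 0))"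

lemma row_add_mat_carrier [simp]: "row_add_mat n q a \<in> carrier_mat n n"
  by (simp add: row_add_mat_def)

lemma col_add_mat_carrier [simp]: "col_add_mat n q b \<in> carrier_mat n n"
  by (simp add: col_add_mat_def)

lemma index_row_add_mat:
  "i < n \<Longrightarrow> l < n \<Longrightarrow>
   row_add_mat n q a $$ (i, l) = (if i = l then 1 else 0) + (if l = q then a i else 0)"
  by (simp add: row_add_mat_def)

lemma index_col_add_mat:
  "i < n \<Longrightarrow> l < n \<Longrightarrow>
   col_add_mat n q b $$ (i, l) = (if i = l then 1 else 0) + (if i = q then b l else 0)"
  by (simp add: col_add_mat_def)

lemma row_add_mat_mult_index:
  assumes C: "C \<in> carrier_mat n n" and q: "q < n" and ij: "i < n" "j < n"
  shows "(row_add_mat n q a * C) $$ (i, j) = C $$ (i, j) + a i * C $$ (q, j)"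
proof -
  have "(row_add_mat n q a * C) $$ (i, j)
      = (\<Sum>l<n. (if l = i then C $$ (i, j) else 0) + (if l = q then a i * C $$ (q, j) else 0))"
    using mat_mult_index_sum[OF row_add_mat_carrier C ij] ij
    by (auto simp: index_row_add_mat algebra_simps intro!: sum.cong)
  also have "\<dots> = C $$ (i, j) + a i * C $$ (q, j)"
    unfolding sum.distrib using ij q by simp
  finally show ?thesis .
qed

lemma col_add_mat_mult_index:
  assumes C: "C \<in> carrier_mat n n" and q: "q < n" and ij: "i < n" "j < n"
  shows "(C * col_add_mat n q b) $$ (i, j) = C $$ (i, j) + C $$ (i, q) * b j"
proof -
  have "(C * col_add_mat n q b) $$ (i, j)
      = (\<Sum>l<n. (if l = j then C $$ (i, j) else 0) + (if l = q then C $$ (i, q) * b j else 0))"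
    using mat_mult_index_sum[OF C col_add_mat_carrier ij] ij
    by (auto simp: index_col_add_mat algebra_simps intro!: sum.cong)
  also have "\<dots> = C $$ (i, j) + C $$ (i, q) * b j"
    unfolding sum.distrib using ij q by simp
  finally show ?thesis .
qed

lemma row_add_mat_inverse:
  assumes "q < n" and "a q = 0"
  shows "row_add_mat n q a * row_add_mat n q (\<lambda>i. - a i) = (1\<^sub>m n :: 'a::field mat)"
proof (rule eq_matI)
  fix i j assume "i < dim_row (1\<^sub>m n :: 'a mat)" "j < dim_col (1\<^sub>m n :: 'a mat)"
  then have ij: "i < n" "j < n" by auto
  have "(row_add_mat n q a * row_add_mat n q (\<lambda>i. - a i)) $$ (i, j)
      = row_add_mat n q (\<lambda>i. - a i) $$ (i, j) + a i * row_add_mat n q (\<lambda>i. - a i) $$ (q, j)"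
    using assms(1) ij by (intro row_add_mat_mult_index) auto
  also have "\<dots> = 1\<^sub>m n $$ (i, j)"
    using assms ij by (simp add: index_row_add_mat)
  finally show "(row_add_mat n q a * row_add_mat n q (\<lambda>i. - a i)) $$ (i, j) = 1\<^sub>m n $$ (i, j)" .
qed (simp_all add: carrier_matD[OF row_add_mat_carrier])

lemma col_add_mat_inverse:
  assumes "q < n" and "b q = 0"
  shows "col_add_mat n q b * col_add_mat n q (\<lambda>i. - b i) = (1\<^sub>m n :: 'a::field mat)"
proof (rule eq_matI)
  fix i j assume "i < dim_row (1\<^sub>m n :: 'a mat)" "j < dim_col (1\<^sub>m n :: 'a mat)"
  then have ij: "i < n" "j < n" by auto
  have "(col_add_mat n q b * col_add_mat n q (\<lambda>i. - b i)) $$ (i, j)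
      = col_add_mat n q b $$ (i, j) + col_add_mat n q b $$ (i, q) * - b j"
    using assms(1) ij by (intro col_add_mat_mult_index) auto
  also have "\<dots> = 1\<^sub>m n $$ (i, j)"
    using assms ij by (cases "i = q") (simp_all add: index_col_add_mat)
  finally show "(col_add_mat n q b * col_add_mat n q (\<lambda>i. - b i)) $$ (i, j) = 1\<^sub>m n $$ (i, j)" .
qed (simp_all add: carrier_matD[OF col_add_mat_carrier])

section \<open>The block upper triangular group\<close>

definition block_upper :: "nat \<Rightarrow> nat \<Rightarrow> 'a::field mat \<Rightarrow> bool" where
  "block_upper m n A \<longleftrightarrow> (\<forall>i<n. \<forall>j<n. A $$ (i, j) \<noteq> 0 \<longrightarrow> i div m = j div m \<and> i \<le> j)"

lemma B_blocks_iff: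
  "b \<in> B_blocks m d \<longleftrightarrow>
     b \<in> carrier_mat (m * d) (m * d) \<and> invertible_mat b \<and> block_upper m (m * d) b"
  by (simp add: B_blocks_def block_upper_def)

lemma B_blocks_carrier: "b \<in> B_blocks m d \<Longrightarrow> b \<in> carrier_mat (m * d) (m * d)"
  by (simp add: B_blocks_def)

lemma B_blocks_nonzero_D:
  "b \<in> B_blocks m d \<Longrightarrow> i < m * d \<Longrightarrow> j < m * d \<Longrightarrow> b $$ (i, j) \<noteq> 0 \<Longrightarrow>
   i div m = j div m \<and> i \<le> j"
  by (simp add: B_blocks_def)

lemma block_upper_mult:
  assumes "A \<in> carrier_mat n n" "B \<in> carrier_mat n n" "block_upper m n A" "block_upper m n B"
  shows "block_upper m n (A * B)"
  unfolding block_upper_def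
proof (intro allI impI)
  fix i j assume ij: "i < n" "j < n" and "(A * B) $$ (i, j) \<noteq> 0"
  then obtain k where k: "k < n" "A $$ (i, k) \<noteq> 0" "B $$ (k, j) \<noteq> 0"
    using mat_mult_index_nonzero_ex assms(1,2) by blast
  have "i div m = k div m \<and> i \<le> k" using assms(3) ij(1) k unfolding block_upper_def by blast
  moreover have "k div m = j div m \<and> k \<le> j" using assms(4) ij(2) k unfolding block_upper_def by blast
  ultimately show "i div m = j div m \<and> i \<le> j" by simp
qed

lemma B_blocks_one: "1\<^sub>m (m * d) \<in> B_blocks m d"
proof -
  have "invertible_mat (1\<^sub>m (m * d) :: 'a mat)"
    unfolding invertible_mat_iff_right_inverse[OF one_carrier_mat] by auto
  then show ?thesis by (auto simp: B_blocks_def)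
qed

lemma B_blocks_mult:
  assumes "b \<in> B_blocks m d" "c \<in> B_blocks m d"
  shows "b * c \<in> B_blocks m d"
proof -
  have C: "b \<in> carrier_mat (m * d) (m * d)" "c \<in> carrier_mat (m * d) (m * d)"
    using assms by (auto simp: B_blocks_iff)
  show ?thesis
    using assms invertible_mat_mult[OF C] block_upper_mult[OF C] C unfolding B_blocks_iff by simp
qed

lemma B_blocks_diag_nonzero:
  assumes b: "(b :: 'a::field mat) \<in> B_blocks m d" and i: "i < m * d"
  shows "b $$ (i, i) \<noteq> 0"
proof -
  have C: "b \<in> carrier_mat (m * d) (m * d)" using b by (rule B_blocks_carrier)
  obtain c where c: "c \<in> carrier_mat (m * d) (m * d)" "b * c = 1\<^sub>m (m * d)"
    using b unfolding B_blocks_iff invertible_mat_iff_right_inverse[OF C] by blast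
  have "det b * det c = 1" using det_mult[OF C c(1)] c(2) by simp
  then have "det b \<noteq> 0" by auto
  moreover have "upper_triangular b"
    unfolding upper_triangular_def
  proof (intro allI impI)
    fix i j assume "i < dim_row b" "j < i"
    then show "b $$ (i, j) = 0" using B_blocks_nonzero_D[OF b, of i j] C by fastforce
  qed
  ultimately have "prod_list (diag_mat b) \<noteq> 0" using det_upper_triangular[OF _ C] by simp
  then show ?thesis using i C by (auto simp: prod_list_zero_iff diag_mat_def)
qed

text \<open>By induction on the column \<open>j\<close>: at a position \<open>(i, j)\<close> outside the block upper triangle,
  all terms of \<open>(c * b) $$ (i, j) = 0\<close> except \<open>c $$ (i, j) * b $$ (j, j)\<close> vanish.\<close>

lemma B_blocks_left_inverse:
  assumes b: "(b :: 'a::field mat) \<in> B_blocks m d" and c: "c \<in> carrier_mat (m * d) (m * d)"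
    and cb: "c * b = 1\<^sub>m (m * d)"
  shows "c \<in> B_blocks m d"
proof -
  let ?n = "m * d"
  have C: "b \<in> carrier_mat ?n ?n" using b by (rule B_blocks_carrier)
  have "c $$ (i, j) = 0" if "i < ?n" "j < ?n" "\<not> (i div m = j div m \<and> i \<le> j)" for i j
    using that
  proof (induction j arbitrary: i rule: less_induct)
    case (less j)
    have "(c * b) $$ (i, j) = (\<Sum>k<?n. c $$ (i, k) * b $$ (k, j))"
      using mat_mult_index_sum[OF c C less.prems(1,2)] .
    also have "\<dots> = c $$ (i, j) * b $$ (j, j)"
    proof (rule sum_eq_single)
      fix k assume k: "k \<in> {..<?n}" "k \<noteq> j"
      show "c $$ (i, k) * b $$ (k, j) = 0"
      proof (cases "b $$ (k, j) = 0")
        case False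
        then have "k div m = j div m" "k < j"
          using B_blocks_nonzero_D[OF b _ less.prems(2)] k by fastforce+
        then show ?thesis using less.IH[of k i] less.prems k by auto
      qed simp
    qed (use less.prems in auto)
    finally have "(c * b) $$ (i, j) = c $$ (i, j) * b $$ (j, j)" .
    moreover have "(c * b) $$ (i, j) = 0" using cb less.prems by auto
    ultimately show ?case using B_blocks_diag_nonzero[OF b less.prems(2)] by simp
  qed
  then have "block_upper m ?n c" unfolding block_upper_def by blast
  moreover have "invertible_mat c"
    unfolding invertible_mat_iff_right_inverse[OF c] using C cb by blast
  ultimately show ?thesis using c unfolding B_blocks_iff by blast
qed

lemma B_blocks_inverse:
  assumes b: "(b :: 'a::field mat) \<in> B_blocks m d"
  obtains c where "c \<in> B_blocks m d" "b * c = 1\<^sub>m (m * d)" "c * b = 1\<^sub>m (m * d)"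
proof -
  have C: "b \<in> carrier_mat (m * d) (m * d)" using b by (rule B_blocks_carrier)
  obtain c where c: "c \<in> carrier_mat (m * d) (m * d)" "b * c = 1\<^sub>m (m * d)"
    using b unfolding B_blocks_iff invertible_mat_iff_right_inverse[OF C] by blast
  have cb: "c * b = 1\<^sub>m (m * d)" using mat_mult_left_right_inverse[OF C c] .
  show ?thesis using that B_blocks_left_inverse[OF b c(1) cb] c(2) cb by blast
qed

lemma row_add_mat_B_blocks:
  assumes q: "q < m * d" and "a q = 0"
    and a: "\<And>i. i < m * d \<Longrightarrow> a i \<noteq> 0 \<Longrightarrow> i < q \<and> i div m = q div m"
  shows "row_add_mat (m * d) q a \<in> B_blocks m d"
proof -
  have "invertible_mat (row_add_mat (m * d) q a)"
    unfolding invertible_mat_iff_right_inverse[OF row_add_mat_carrier]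
    using row_add_mat_inverse[where n = "m * d" and a = a, OF assms(1,2)] row_add_mat_carrier by blast
  moreover have "block_upper m (m * d) (row_add_mat (m * d) q a)"
    unfolding block_upper_def by (auto simp: index_row_add_mat split: if_splits dest: a)
  ultimately show ?thesis unfolding B_blocks_iff by simp
qed

lemma col_add_mat_B_blocks:
  assumes q: "q < m * d" and "b q = 0"
    and b: "\<And>l. l < m * d \<Longrightarrow> b l \<noteq> 0 \<Longrightarrow> q < l \<and> q div m = l div m"
  shows "col_add_mat (m * d) q b \<in> B_blocks m d"
proof -
  have "invertible_mat (col_add_mat (m * d) q b)"
    unfolding invertible_mat_iff_right_inverse[OF col_add_mat_carrier]
    using col_add_mat_inverse[where n = "m * d" and b = b, OF assms(1,2)] col_add_mat_carrier by blast
  moreover have "block_upper m (m * d) (col_add_mat (m * d) q b)"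
    unfolding block_upper_def by (auto simp: index_col_add_mat split: if_splits dest: b)
  ultimately show ?thesis unfolding B_blocks_iff by simp
qed

lemma permutes_if_inj_on_self:
  assumes "finite A" "inj_on f A" "f ` A \<subseteq> A" "\<And>x. x \<notin> A \<Longrightarrow> f x = x"
  shows "f permutes A"
proof -
  have "f ` A = A" using endo_inj_surj[OF assms(1,3,2)] .
  then show ?thesis using assms(2,4) by (intro bij_imp_permutes) (auto simp: bij_betw_def)
qed

lemma block_index_less:
  assumes "J < d" "a < (m::nat)"
  shows "J * m + a < m * d"
proof -
  have "J * m + a < (J + 1) * m" using assms(2) by simp
  also have "\<dots> \<le> d * m" using assms(1) by (intro mult_right_mono) auto
  finally show ?thesis by (simp add: mult.commute)
qed

lemma wreath_permutes:
  assumes m: "0 < m" and w: "w \<in> wreath m d"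
  obtains \<sigma> where "\<sigma> permutes {..<d}" "w permutes {..<m * d}"
    "\<And>j. j < m * d \<Longrightarrow> w j div m = \<sigma> (j div m)"
proof -
  obtain ws \<sigma> where wdef: "w = wreath_perm m d ws \<sigma>" and s: "\<sigma> permutes {..<d}"
    and ws: "\<And>i. i < d \<Longrightarrow> ws i permutes {..<m}"
    using w unfolding wreath_def by blast
  have bnd: "\<sigma> (x div m) < d" "ws (\<sigma> (x div m)) (x mod m) < m" if "x < m * d" for x
  proof -
    show "\<sigma> (x div m) < d"
      using permutes_in_image[OF s] that by (simp add: less_mult_imp_div_less mult.commute)
    then show "ws (\<sigma> (x div m)) (x mod m) < m" using permutes_in_image[OF ws] m by simp
  qed
  have wx: "w x = \<sigma> (x div m) * m + ws (\<sigma> (x div m)) (x mod m)" if "x < m * d" for x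
    using that by (simp add: wdef wreath_perm_def)
  have divw: "w x div m = \<sigma> (x div m)" and modw: "w x mod m = ws (\<sigma> (x div m)) (x mod m)"
    if "x < m * d" for x
    using wx[OF that] bnd[OF that] by auto
  have "inj_on w {..<m * d}"
  proof (rule inj_onI)
    fix x y assume x: "x \<in> {..<m * d}" and y: "y \<in> {..<m * d}" and e: "w x = w y"
    have dd: "x div m = y div m"
      using divw x y e permutes_inj[OF s] by (metis injD lessThan_iff)
    have "ws (\<sigma> (x div m)) (x mod m) = ws (\<sigma> (x div m)) (y mod m)"
      using modw x y e dd by (metis lessThan_iff)
    then have "x mod m = y mod m"
      using permutes_inj[OF ws[OF bnd(1)]] x by (meson injD lessThan_iff)
    then show "x = y" using dd by (metis div_mult_mod_eq)
  qed
  moreover have "w ` {..<m * d} \<subseteq> {..<m * d}"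
    using wx bnd block_index_less by (simp add: image_subset_iff)
  ultimately have "w permutes {..<m * d}"
    by (intro permutes_if_inj_on_self) (auto simp: wdef wreath_perm_def)
  then show ?thesis using that s divw by blast
qed

lemma wreath_of_block_map:
  assumes m: "0 < m" and s: "\<sigma> permutes {..<d}" and inj: "inj_on p {..<m * d}"
    and p: "\<And>j. j < m * d \<Longrightarrow> p j < m * d \<and> p j div m = \<sigma> (j div m)"
  obtains w where "w \<in> wreath m d" "\<And>j. j < m * d \<Longrightarrow> w j = p j"
proof -
  define ws where "ws i a = (if a < m then p (inv_into UNIV \<sigma> i * m + a) mod m else a)" for i a
  have "ws i permutes {..<m}" if i: "i < d" for i
  proof (rule permutes_if_inj_on_self)
    define J where "J = inv_into UNIV \<sigma> i"
    have J: "J < d" using permutes_in_image[OF permutes_inv[OF s]] i by (simp add: J_def)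
    show "inj_on (ws i) {..<m}"
    proof (rule inj_onI)
      fix a a' assume "a \<in> {..<m}" "a' \<in> {..<m}" and e: "ws i a = ws i a'"
      then have am: "a < m" "a' < m" by auto
      have "p (J * m + a) mod m = p (J * m + a') mod m"
        using e am by (simp add: ws_def J_def)
      moreover have "p (J * m + a) div m = p (J * m + a') div m"
        using p[OF block_index_less[OF J am(1)]] p[OF block_index_less[OF J am(2)]] am by simp
      ultimately have "p (J * m + a) = p (J * m + a')" by (metis div_mult_mod_eq)
      then have "J * m + a = J * m + a'"
        using inj_onD[OF inj] block_index_less[OF J] am by blast
      then show "a = a'" by simp
    qed
  qed (use m in \<open>auto simp: ws_def\<close>)
  then have "wreath_perm m d ws \<sigma> \<in> wreath m d" unfolding wreath_def using s by blast
  moreover have "wreath_perm m d ws \<sigma> j = p j" if j: "j < m * d" for j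
  proof -
    have "wreath_perm m d ws \<sigma> j = \<sigma> (j div m) * m + p (j div m * m + j mod m) mod m"
      using j m by (simp add: wreath_perm_def ws_def permutes_inverses(2)[OF s])
    also have "\<dots> = p j" using p[OF j] by (metis div_mult_mod_eq)
    finally show ?thesis .
  qed
  ultimately show ?thesis using that by blast
qed

section \<open>Matrices respecting a block permutation\<close>

definition block_pattern :: "nat \<Rightarrow> nat \<Rightarrow> (nat \<Rightarrow> nat) \<Rightarrow> 'a::field mat \<Rightarrow> bool" where
  "block_pattern m n \<sigma> A \<longleftrightarrow> (\<forall>i<n. \<forall>j<n. A $$ (i, j) \<noteq> 0 \<longrightarrow> i div m = \<sigma> (j div m))"

lemma block_pattern_mult:
  assumes "A \<in> carrier_mat n n" "B \<in> carrier_mat n n"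
    and "block_pattern m n \<sigma> A" "block_pattern m n \<tau> B"
  shows "block_pattern m n (\<sigma> \<circ> \<tau>) (A * B)"
  unfolding block_pattern_def
proof (intro allI impI)
  fix i j assume ij: "i < n" "j < n" and "(A * B) $$ (i, j) \<noteq> 0"
  then obtain k where k: "k < n" "A $$ (i, k) \<noteq> 0" "B $$ (k, j) \<noteq> 0"
    using mat_mult_index_nonzero_ex assms(1,2) by blast
  have "i div m = \<sigma> (k div m)" using assms(3) ij(1) k unfolding block_pattern_def by blast
  moreover have "k div m = \<tau> (j div m)" using assms(4) ij(2) k unfolding block_pattern_def by blast
  ultimately show "i div m = (\<sigma> \<circ> \<tau>) (j div m)" by simp
qed

lemma block_upper_imp_block_pattern_id: "block_upper m n A \<Longrightarrow> block_pattern m n id A"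
  by (simp add: block_upper_def block_pattern_def)

lemma monomial_mat_inverse:
  assumes M: "monomial_mat n w (M :: 'a::field mat)" and w: "w permutes {..<n}"
  obtains M' where "monomial_mat n (inv_into UNIV w) M'" "M' * M = 1\<^sub>m n" "M * M' = 1\<^sub>m n"
proof -
  define M' where "M' = mat n n (\<lambda>(i, j). if i = inv_into UNIV w j then inverse (M $$ (j, i)) else 0)"
  have MC: "M \<in> carrier_mat n n" using M by (simp add: monomial_mat_def)
  have M'C: "M' \<in> carrier_mat n n" by (simp add: M'_def)
  have Mnz: "M $$ (w j, j) \<noteq> 0" if "j < n" for j
    using M that permutes_in_image[OF w] by (simp add: monomial_mat_def)
  have inv_w: "w (inv_into UNIV w j) = j" "inv_into UNIV w (w j) = j" for j
    using permutes_inverses[OF w] by auto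
  have M': "monomial_mat n (inv_into UNIV w) M'"
    unfolding monomial_mat_def
    using M'C Mnz[of "inv_into UNIV w _"] permutes_in_image[OF permutes_inv[OF w]]
    by (auto simp: M'_def inv_w)
  have "M' * M = 1\<^sub>m n"
  proof (rule eq_matI)
    fix i k assume "i < dim_row (1\<^sub>m n :: 'a mat)" "k < dim_col (1\<^sub>m n :: 'a mat)"
    then have ik: "i < n" "k < n" by auto
    have "(M' * M) $$ (i, k) = M' $$ (i, w k) * M $$ (w k, k)"
      using monomial_mat_mult_index[OF M'C M w ik] .
    then show "(M' * M) $$ (i, k) = 1\<^sub>m n $$ (i, k)"
      using ik permutes_in_image[OF w] Mnz[OF ik(2)] by (auto simp: M'_def inv_w)
  qed (use M'C MC in auto)
  moreover then have "M * M' = 1\<^sub>m n" using mat_mult_left_right_inverse[OF M'C MC] by simp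
  ultimately show ?thesis using that M' by blast
qed

lemma monomial_mat_block_pattern:
  assumes "monomial_mat n w M" "\<And>j. j < n \<Longrightarrow> w j div m = \<sigma> (j div m)"
  shows "block_pattern m n \<sigma> M"
  using assms unfolding monomial_mat_def block_pattern_def by auto

definition block_monomial :: "nat \<Rightarrow> nat \<Rightarrow> 'a::field mat set" where
  "block_monomial m d = {A \<in> carrier_mat (m * d) (m * d). invertible_mat A \<and>
     (\<exists>\<sigma>. \<sigma> permutes {..<d} \<and> block_pattern m (m * d) \<sigma> A)}"

lemma block_monomial_carrier: "A \<in> block_monomial m d \<Longrightarrow> A \<in> carrier_mat (m * d) (m * d)"
  by (simp add: block_monomial_def)

lemma block_monomial_mult:
  assumes "A \<in> block_monomial m d" "B \<in> block_monomial m d"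
  shows "A * B \<in> block_monomial m d"
proof -
  obtain \<sigma> where \<sigma>: "\<sigma> permutes {..<d}" "block_pattern m (m * d) \<sigma> A"
    using assms(1) by (auto simp: block_monomial_def)
  obtain \<tau> where \<tau>: "\<tau> permutes {..<d}" "block_pattern m (m * d) \<tau> B"
    using assms(2) by (auto simp: block_monomial_def)
  have C: "A \<in> carrier_mat (m * d) (m * d)" "B \<in> carrier_mat (m * d) (m * d)"
    using assms by (auto simp: block_monomial_def)
  have "invertible_mat A" "invertible_mat B"
    using assms by (simp_all add: block_monomial_def)
  then have "invertible_mat (A * B)" by (rule invertible_mat_mult[OF C])
  moreover have "block_pattern m (m * d) (\<sigma> \<circ> \<tau>) (A * B)"
    using block_pattern_mult[OF C \<sigma>(2) \<tau>(2)] .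
  moreover have "\<sigma> \<circ> \<tau> permutes {..<d}" using permutes_compose[OF \<tau>(1) \<sigma>(1)] .
  ultimately show ?thesis using mult_carrier_mat[OF C] unfolding block_monomial_def by blast
qed

lemma B_blocks_subset_block_monomial: "B_blocks m d \<subseteq> block_monomial m d"
proof
  fix b :: "'a mat" assume "b \<in> B_blocks m d"
  then show "b \<in> block_monomial m d"
    using block_upper_imp_block_pattern_id permutes_id[of "{..<d}"]
    unfolding B_blocks_iff block_monomial_def by blast
qed

lemma N_wr_inverse_block_monomial:
  assumes m: "0 < m" and A: "(A :: 'a::field mat) \<in> N_wr m d"
  obtains A' where "A \<in> block_monomial m d" "A' \<in> block_monomial m d"
    "A * A' = 1\<^sub>m (m * d)" "A' * A = 1\<^sub>m (m * d)"
proof -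
  let ?n = "m * d"
  obtain w where "w \<in> wreath m d" and M: "monomial_mat ?n w A"
    using A by (auto simp: N_wr_def)
  then obtain \<sigma> where \<sigma>: "\<sigma> permutes {..<d}" and w: "w permutes {..<?n}"
    and w_blocks: "\<And>j. j < ?n \<Longrightarrow> w j div m = \<sigma> (j div m)"
    using wreath_permutes[OF m] by blast
  obtain A' where M': "monomial_mat ?n (inv_into UNIV w) A'" and A'A: "A' * A = 1\<^sub>m ?n"
    and AA': "A * A' = 1\<^sub>m ?n"
    using monomial_mat_inverse[OF M w] by blast
  have AC: "A \<in> carrier_mat ?n ?n" and A'C: "A' \<in> carrier_mat ?n ?n"
    using M M' by (simp_all add: monomial_mat_def)
  have "inv_into UNIV w j div m = inv_into UNIV \<sigma> (j div m)" if "j < ?n" for j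
  proof -
    have "inv_into UNIV w j < ?n" using permutes_in_image[OF permutes_inv[OF w]] that by simp
    then have "j div m = \<sigma> (inv_into UNIV w j div m)"
      using w_blocks permutes_inverses(1)[OF w] by metis
    then show ?thesis using permutes_inverses(2)[OF \<sigma>] by simp
  qed
  then have "block_pattern m ?n (inv_into UNIV \<sigma>) A'" by (rule monomial_mat_block_pattern[OF M'])
  moreover have "block_pattern m ?n \<sigma> A" using monomial_mat_block_pattern[OF M w_blocks] .
  moreover have "invertible_mat A" "invertible_mat A'"
    using AC A'C AA' A'A invertible_mat_iff_right_inverse by blast+
  ultimately have "A \<in> block_monomial m d" "A' \<in> block_monomial m d"
    using AC A'C \<sigma> permutes_inv[OF \<sigma>] unfolding block_monomial_def by blast+
  then show ?thesis using that AA' A'A by blast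
qed

lemma gen_group_subset_units:
  fixes X :: "'a::field mat set"
  assumes X: "X \<subseteq> carrier_mat n n" and one: "1\<^sub>m n \<in> X"
    and mult: "\<And>A B. A \<in> X \<Longrightarrow> B \<in> X \<Longrightarrow> A * B \<in> X"
    and gens: "\<And>A. A \<in> S \<Longrightarrow> A \<in> X \<and> (\<exists>A'\<in>X. A * A' = 1\<^sub>m n \<and> A' * A = 1\<^sub>m n)"
  shows "gen_group n S \<subseteq> X"
proof -
  have "A \<in> X \<and> (\<exists>A'\<in>X. A * A' = 1\<^sub>m n \<and> A' * A = 1\<^sub>m n)" if "A \<in> gen_group n S" for A
    using that
  proof (induction rule: gen_group.induct)
    case one
    then show ?case using \<open>1\<^sub>m n \<in> X\<close> by force
  next
    case (gen A)
    then show ?case by (rule gens)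
  next
    case (mult A B)
    then obtain A' B' where A': "A' \<in> X" "A * A' = 1\<^sub>m n" "A' * A = 1\<^sub>m n"
      and B': "B' \<in> X" "B * B' = 1\<^sub>m n" "B' * B = 1\<^sub>m n" by blast
    have C: "A \<in> carrier_mat n n" "B \<in> carrier_mat n n" "A' \<in> carrier_mat n n" "B' \<in> carrier_mat n n"
      using mult.IH A' B' X by blast+
    show ?case
      using assms(3) mult.IH A'(1) B'(1)
        mat_mult_inverse_reverse[OF C A'(2) B'(2)] mat_mult_inverse_reverse[OF C(4,3,2,1) B'(3) A'(3)]
      by blast
  next
    case (inv A B)
    then obtain A' where A': "A' \<in> X" "A * A' = 1\<^sub>m n" "A' * A = 1\<^sub>m n" by blast
    have "B = (B * A) * A'"
      using A' inv.hyps(2) X inv.IH by (simp add: assoc_mult_mat[of _ n n _ n _ n] subsetD)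
    also have "\<dots> = A'" using inv.hyps(4) A' X by auto
    finally show ?case using A'(1) inv.IH inv.hyps(3,4) by blast
  qed
  then show ?thesis by blast
qed

lemma G_wr_subset_block_monomial:
  assumes "0 < m"
  shows "G_wr m d \<subseteq> (block_monomial m d :: 'a::field mat set)"
  unfolding G_wr_def
proof (rule gen_group_subset_units)
  show "block_monomial m d \<subseteq> carrier_mat (m * d) (m * d)"
    by (auto simp: block_monomial_def)
  show "1\<^sub>m (m * d) \<in> block_monomial m d"
    using B_blocks_subset_block_monomial B_blocks_one by blast
next
  fix A :: "'a mat" assume "A \<in> B_blocks m d \<union> N_wr m d"
  then show "A \<in> block_monomial m d \<and>
      (\<exists>A'\<in>block_monomial m d. A * A' = 1\<^sub>m (m * d) \<and> A' * A = 1\<^sub>m (m * d))"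
  proof
    assume b: "A \<in> B_blocks m d"
    then obtain c where "c \<in> B_blocks m d" "A * c = 1\<^sub>m (m * d)" "c * A = 1\<^sub>m (m * d)"
      by (rule B_blocks_inverse)
    then show ?thesis using b B_blocks_subset_block_monomial by blast
  next
    assume "A \<in> N_wr m d"
    then show ?thesis using N_wr_inverse_block_monomial[OF assms] by metis
  qed
qed (rule block_monomial_mult)

section \<open>Double cosets\<close>

definition B_equiv :: "nat \<Rightarrow> nat \<Rightarrow> 'a::field mat \<Rightarrow> 'a mat \<Rightarrow> bool" where
  "B_equiv m d A C \<longleftrightarrow> (\<exists>b1\<in>B_blocks m d. \<exists>b2\<in>B_blocks m d. A = b1 * C * b2)"

lemma double_coset_iff:
  "A \<in> double_coset m d w \<longleftrightarrow> (\<exists>M. monomial_mat (m * d) w M \<and> B_equiv m d A M)"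
  unfolding double_coset_def B_equiv_def by auto

lemma B_equiv_refl:
  assumes "A \<in> carrier_mat (m * d) (m * d)"
  shows "B_equiv m d A A"
  unfolding B_equiv_def
proof (intro bexI)
  show "A = 1\<^sub>m (m * d) * A * 1\<^sub>m (m * d)" using assms by simp
qed (rule B_blocks_one)+

lemma B_equiv_trans:
  assumes "B_equiv m d A C" "B_equiv m d C D" "D \<in> carrier_mat (m * d) (m * d)"
  shows "B_equiv m d A D"
proof -
  obtain b1 b2 where b: "b1 \<in> B_blocks m d" "b2 \<in> B_blocks m d" "A = b1 * C * b2"
    using assms(1) unfolding B_equiv_def by blast
  obtain c1 c2 where c: "c1 \<in> B_blocks m d" "c2 \<in> B_blocks m d" "C = c1 * D * c2"
    using assms(2) unfolding B_equiv_def by blast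
  have "b1 * (c1 * D * c2) * b2 = (b1 * c1) * D * (c2 * b2)"
    using assms(3) B_blocks_carrier[OF b(1)] B_blocks_carrier[OF b(2)]
      B_blocks_carrier[OF c(1)] B_blocks_carrier[OF c(2)]
    by (simp add: assoc_mult_mat[of _ "m * d" "m * d" _ "m * d" _ "m * d"])
  then have "A = (b1 * c1) * D * (c2 * b2)" using b(3) c(3) by simp
  then show ?thesis unfolding B_equiv_def using B_blocks_mult b c by blast
qed

lemma B_equiv_sym:
  assumes "B_equiv m d A C" "C \<in> carrier_mat (m * d) (m * d)"
  shows "B_equiv m d C A"
proof -
  obtain b1 b2 where b: "b1 \<in> B_blocks m d" "b2 \<in> B_blocks m d" "A = b1 * C * b2"
    using assms(1) unfolding B_equiv_def by blast
  obtain c1 where c1: "c1 \<in> B_blocks m d" "c1 * b1 = 1\<^sub>m (m * d)"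
    using B_blocks_inverse[OF b(1)] by blast
  obtain c2 where c2: "c2 \<in> B_blocks m d" "b2 * c2 = 1\<^sub>m (m * d)"
    using B_blocks_inverse[OF b(2)] by blast
  have "c1 * (b1 * C * b2) * c2 = (c1 * b1) * C * (b2 * c2)"
    using assms(2) B_blocks_carrier[OF b(1)] B_blocks_carrier[OF b(2)]
      B_blocks_carrier[OF c1(1)] B_blocks_carrier[OF c2(1)]
    by (simp add: assoc_mult_mat[of _ "m * d" "m * d" _ "m * d" _ "m * d"])
  then have "C = c1 * A * c2" using b(3) c1(2) c2(2) assms(2) by simp
  then show ?thesis unfolding B_equiv_def using c1 c2 by blast
qed

lemma B_equiv_mult:
  assumes "C \<in> carrier_mat (m * d) (m * d)" "L \<in> B_blocks m d" "R \<in> B_blocks m d"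
  shows "B_equiv m d C (L * C * R)"
proof (rule B_equiv_sym)
  show "B_equiv m d (L * C * R) C" unfolding B_equiv_def using assms(2,3) by blast
qed (rule assms(1))

lemma double_coset_subset_G_wr:
  assumes "w \<in> wreath m d"
  shows "double_coset m d w \<subseteq> (G_wr m d :: 'a::field mat set)"
proof
  fix A :: "'a mat" assume "A \<in> double_coset m d w"
  then obtain b1 M b2 where "b1 \<in> B_blocks m d" "b2 \<in> B_blocks m d"
    and "monomial_mat (m * d) w M" and A: "A = b1 * M * b2"
    unfolding double_coset_def by blast
  then show "A \<in> G_wr m d"
    unfolding A G_wr_def using assms
    by (intro gen_group.mult gen_group.gen) (auto simp: N_wr_def)
qed

lemma eq_on_lessThan_if_attained_below:
  fixes f g :: "nat \<Rightarrow> 'b" and j :: nat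
  assumes "inj_on f {..<n}" and "\<And>j. j < n \<Longrightarrow> \<exists>k\<le>j. g k = f j"
  shows "j < n \<Longrightarrow> f j = g j"
proof (induction j rule: less_induct)
  case (less j)
  then obtain k where k: "k \<le> j" "g k = f j" using assms(2) by blast
  show ?case
  proof (cases "k < j")
    case True
    then have "f k = f j" using less k by simp
    then show ?thesis using inj_onD[OF assms(1)] True less.prems by fastforce
  qed (use k in simp)
qed

text \<open>If \<open>P * M = M' * Q\<close> with \<open>P, Q\<close> upper triangular, the nonzero entry of \<open>M\<close> in column
  \<open>j\<close> forces a nonzero entry of \<open>M'\<close> in row \<open>w j\<close> at some column \<open>k \<le> j\<close>.\<close>

lemma monomial_B_equiv_eq:
  assumes M: "monomial_mat (m * d) w M" and M': "monomial_mat (m * d) w' M'"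
    and w: "w permutes {..<m * d}" and w': "w' permutes {..<m * d}"
    and equiv: "B_equiv m d M M'"
  shows "w = w'"
proof -
  let ?n = "m * d"
  obtain b1 b2 where b: "b1 \<in> B_blocks m d" "b2 \<in> B_blocks m d" "M = b1 * M' * b2"
    using equiv unfolding B_equiv_def by blast
  obtain P where P: "P \<in> B_blocks m d" "P * b1 = 1\<^sub>m ?n"
    using B_blocks_inverse[OF b(1)] by blast
  have MC: "M \<in> carrier_mat ?n ?n" and M'C: "M' \<in> carrier_mat ?n ?n"
    using M M' by (simp_all add: monomial_mat_def)
  have PC: "P \<in> carrier_mat ?n ?n" and QC: "b2 \<in> carrier_mat ?n ?n"
    using P b B_blocks_carrier by blast+
  have "P * (b1 * M' * b2) = (P * b1) * (M' * b2)"
    using M'C B_blocks_carrier[OF b(1)] PC QC by (simp add: assoc_mult_mat[of _ ?n ?n _ ?n _ ?n])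
  then have PM: "P * M = M' * b2" using b(3) P(2) M'C QC by simp
  have "\<exists>k\<le>j. w' k = w j" if j: "j < ?n" for j
  proof -
    have wj: "w j < ?n" using permutes_in_image[OF w] j by simp
    have "(P * M) $$ (w j, j) = P $$ (w j, w j) * M $$ (w j, j)"
      using monomial_mat_mult_index[OF PC M w wj j] .
    then have "(M' * b2) $$ (w j, j) \<noteq> 0"
      using PM B_blocks_diag_nonzero[OF P(1) wj] M j wj by (simp add: monomial_mat_def)
    then obtain k where k: "k < ?n" "M' $$ (w j, k) \<noteq> 0" "b2 $$ (k, j) \<noteq> 0"
      using mat_mult_index_nonzero_ex[OF M'C QC wj j] by blast
    have "w j = w' k" using M' k wj by (simp add: monomial_mat_def)
    moreover have "k \<le> j" using B_blocks_nonzero_D[OF b(2) k(1) j k(3)] by simp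
    ultimately show ?thesis by auto
  qed
  then have "w j = w' j" if "j < ?n" for j
    using eq_on_lessThan_if_attained_below[OF permutes_inj_on[OF w]] that by blast
  then show "w = w'"
    using permutes_not_in[OF w] permutes_not_in[OF w'] by (metis lessThan_iff ext)
qed

lemma double_cosets_disjoint:
  assumes m: "0 < m" and w: "w \<in> wreath m d" and w': "w' \<in> wreath m d"
    and "A \<in> double_coset m d w" "(A :: 'a::field mat) \<in> double_coset m d w'"
  shows "w = w'"
proof -
  obtain M M' where M: "monomial_mat (m * d) w M" "B_equiv m d A M"
    and M': "monomial_mat (m * d) w' M'" "B_equiv m d A M'"
    using assms(4,5) unfolding double_coset_iff by blast
  have "B_equiv m d M M'"
    using B_equiv_trans[OF B_equiv_sym M'(2)] M(1) M'(1) M(2)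
    by (simp add: monomial_mat_def)
  moreover obtain \<sigma> \<sigma>' where "w permutes {..<m * d}" "w' permutes {..<m * d}"
    using wreath_permutes[OF m w] wreath_permutes[OF m w'] by metis
  ultimately show ?thesis using monomial_B_equiv_eq M(1) M'(1) by blast
qed

section \<open>Elimination\<close>

definition cleared_cols :: "nat \<Rightarrow> nat \<Rightarrow> (nat \<Rightarrow> nat) \<Rightarrow> 'a::field mat \<Rightarrow> bool" where
  "cleared_cols n k p C \<longleftrightarrow> (\<forall>j<k. p j < n \<and> C $$ (p j, j) \<noteq> 0 \<and>
     (\<forall>i<n. i \<noteq> p j \<longrightarrow> C $$ (i, j) = 0) \<and> (\<forall>l<n. l \<noteq> j \<longrightarrow> C $$ (p j, l) = 0))"

lemma cleared_cols_Suc: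
  "cleared_cols n (Suc k) p C \<longleftrightarrow> cleared_cols n k p C \<and> p k < n \<and> C $$ (p k, k) \<noteq> 0 \<and>
     (\<forall>i<n. i \<noteq> p k \<longrightarrow> C $$ (i, k) = 0) \<and> (\<forall>l<n. l \<noteq> k \<longrightarrow> C $$ (p k, l) = 0)"
  unfolding cleared_cols_def less_Suc_eq by blast

lemma cleared_cols_cong:
  assumes "cleared_cols n k p C"
    and "\<And>i j. i < n \<Longrightarrow> j < k \<Longrightarrow> C' $$ (i, j) = C $$ (i, j)"
    and "\<And>j l. j < k \<Longrightarrow> l < n \<Longrightarrow> C' $$ (p j, l) = C $$ (p j, l)"
  shows "cleared_cols n k p C'"
  using assms unfolding cleared_cols_def by simp

lemma cleared_cols_fun_upd:
  "k \<le> j \<Longrightarrow> cleared_cols n k (p(j := q)) C \<longleftrightarrow> cleared_cols n k p C"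
  unfolding cleared_cols_def by auto

lemma row_clearing:
  fixes C :: "'a::field mat"
  assumes C: "C \<in> carrier_mat n n" and q: "q < n" and k: "k < n" and Cqk: "C $$ (q, k) \<noteq> 0"
    and below: "\<forall>i<n. q < i \<longrightarrow> C $$ (i, k) = 0"
    and a: "a = (\<lambda>i. if i < q then - (C $$ (i, k) / C $$ (q, k)) else 0)"
  shows "\<And>i. i < n \<Longrightarrow> (row_add_mat n q a * C) $$ (i, k) = (if i = q then C $$ (q, k) else 0)"
    and "\<And>i j. i < n \<Longrightarrow> j < n \<Longrightarrow> C $$ (i, k) = 0 \<Longrightarrow>
           (row_add_mat n q a * C) $$ (i, j) = C $$ (i, j)"
    and "\<And>i j. i < n \<Longrightarrow> j < n \<Longrightarrow> C $$ (q, j) = 0 \<Longrightarrow>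
           (row_add_mat n q a * C) $$ (i, j) = C $$ (i, j)"
proof -
  fix i assume i: "i < n"
  then show "(row_add_mat n q a * C) $$ (i, k) = (if i = q then C $$ (q, k) else 0)"
    using row_add_mat_mult_index[OF C q i k] below i Cqk a by auto
next
  fix i j assume "i < n" "j < n" "C $$ (i, k) = 0"
  then show "(row_add_mat n q a * C) $$ (i, j) = C $$ (i, j)"
    using row_add_mat_mult_index[OF C q] a by simp
next
  fix i j assume "i < n" "j < n" "C $$ (q, j) = 0"
  then show "(row_add_mat n q a * C) $$ (i, j) = C $$ (i, j)"
    using row_add_mat_mult_index[OF C q] by simp
qed

lemma col_clearing:
  fixes C :: "'a::field mat"
  assumes C: "C \<in> carrier_mat n n" and q: "q < n" and k: "k < n" and Cqk: "C $$ (q, k) \<noteq> 0"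
    and left: "\<forall>l<k. C $$ (q, l) = 0"
    and b: "b = (\<lambda>l. if k < l then - (C $$ (q, l) / C $$ (q, k)) else 0)"
  shows "\<And>l. l < n \<Longrightarrow> (C * col_add_mat n k b) $$ (q, l) = (if l = k then C $$ (q, k) else 0)"
    and "\<And>i j. i < n \<Longrightarrow> j < n \<Longrightarrow> C $$ (i, k) = 0 \<Longrightarrow>
           (C * col_add_mat n k b) $$ (i, j) = C $$ (i, j)"
    and "\<And>i j. i < n \<Longrightarrow> j \<le> k \<Longrightarrow> (C * col_add_mat n k b) $$ (i, j) = C $$ (i, j)"
proof -
  fix l assume l: "l < n"
  then show "(C * col_add_mat n k b) $$ (q, l) = (if l = k then C $$ (q, k) else 0)"
    using col_add_mat_mult_index[OF C k q l] left Cqk b by auto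
next
  fix i j assume "i < n" "j < n" "C $$ (i, k) = 0"
  then show "(C * col_add_mat n k b) $$ (i, j) = C $$ (i, j)"
    using col_add_mat_mult_index[OF C k] by simp
next
  fix i j assume "i < n" "j \<le> k"
  then show "(C * col_add_mat n k b) $$ (i, j) = C $$ (i, j)"
    using col_add_mat_mult_index[OF C k, of i j b] k b by simp
qed

lemma invertible_mat_lowest_nonzero_in_col:
  assumes "(C :: 'a::field mat) \<in> carrier_mat n n" "invertible_mat C" "k < n"
  obtains q where "q < n" "C $$ (q, k) \<noteq> 0" "\<forall>i<n. q < i \<longrightarrow> C $$ (i, k) = 0"
proof -
  define q where "q = Max {i. i < n \<and> C $$ (i, k) \<noteq> 0}"
  have "q \<in> {i. i < n \<and> C $$ (i, k) \<noteq> 0}"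
    unfolding q_def using invertible_mat_col_nonzero[OF assms] by (intro Max_in) auto
  moreover have "\<forall>i<n. q < i \<longrightarrow> C $$ (i, k) = 0"
  proof (intro allI impI, rule ccontr)
    fix i assume "i < n" "q < i" "C $$ (i, k) \<noteq> 0"
    then have "i \<le> q" unfolding q_def by (intro Max_ge) auto
    then show False using \<open>q < i\<close> by simp
  qed
  ultimately show ?thesis using that by blast
qed

text \<open>Row operations clear column \<open>k\<close> above the pivot \<open>(q, k)\<close>, then column operations clear
  row \<open>q\<close> right of it. Earlier pivot rows and columns are untouched, since they meet row \<open>q\<close>
  and column \<open>k\<close> in zeros.\<close>

lemma cleared_cols_Suc_by_clearing:
  fixes C :: "'a::field mat"
  assumes C: "C \<in> carrier_mat n n" and cl: "cleared_cols n k p C" and k: "k < n"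
    and q: "q < n" and Cqk: "C $$ (q, k) \<noteq> 0" and below: "\<forall>i<n. q < i \<longrightarrow> C $$ (i, k) = 0"
    and a: "a = (\<lambda>i. if i < q then - (C $$ (i, k) / C $$ (q, k)) else 0)"
  defines "C1 \<equiv> row_add_mat n q a * C"
  assumes b: "b = (\<lambda>l. if k < l then - (C1 $$ (q, l) / C1 $$ (q, k)) else 0)"
  shows "cleared_cols n (Suc k) (p(k := q)) (C1 * col_add_mat n k b)"
proof -
  have old: "p j < n" "\<And>i. i < n \<Longrightarrow> i \<noteq> p j \<Longrightarrow> C $$ (i, j) = 0"
    "\<And>l. l < n \<Longrightarrow> l \<noteq> j \<Longrightarrow> C $$ (p j, l) = 0" if "j < k" for j
    using cl that unfolding cleared_cols_def by blast+
  have Cpk: "C $$ (p j, k) = 0" if "j < k" for j using old(3)[OF that k] that by simp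
  have pq: "p j \<noteq> q" if "j < k" for j using Cpk[OF that] Cqk by auto
  have Cqj: "C $$ (q, j) = 0" if "j < k" for j using old(2)[OF that q] pq[OF that] by simp
  note L_col = row_clearing[OF C q k Cqk below a, folded C1_def]
  have C1C: "C1 \<in> carrier_mat n n" unfolding C1_def using row_add_mat_carrier C by (rule mult_carrier_mat)
  have C1qk: "C1 $$ (q, k) = C $$ (q, k)" using L_col(1)[OF q] by simp
  have C1_left: "\<forall>l<k. C1 $$ (q, l) = 0" using L_col(3)[OF q _ Cqj] k Cqj by simp
  note R_row = col_clearing[OF C1C q k _ C1_left b, unfolded C1qk, OF Cqk]
  have "cleared_cols n k p (C1 * col_add_mat n k b)"
  proof (rule cleared_cols_cong[OF cl])
    fix i j assume "i < n" "j < k"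
    then show "(C1 * col_add_mat n k b) $$ (i, j) = C $$ (i, j)"
      using R_row(3) L_col(3)[OF _ _ Cqj] k by simp
  next
    fix j l assume "j < k" "l < n"
    then show "(C1 * col_add_mat n k b) $$ (p j, l) = C $$ (p j, l)"
      using R_row(2) L_col(1) L_col(2)[OF _ _ Cpk] old(1) pq by simp
  qed
  moreover have "(C1 * col_add_mat n k b) $$ (i, k) = (if i = q then C $$ (q, k) else 0)"
    if "i < n" for i
    using R_row(3)[OF that] L_col(1)[OF that] by simp
  ultimately show ?thesis
    unfolding cleared_cols_Suc cleared_cols_fun_upd[OF le_refl] using q Cqk R_row(1) by simp
qed

text \<open>Taking the lowest nonzero entry as pivot makes the row operation upper triangular. Both
  operations stay inside one diagonal block: the block pattern places every nonzero entry of
  column \<open>k\<close> in the block of \<open>q\<close>, and every nonzero entry of row \<open>q\<close> in the block of \<open>k\<close>.\<close>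

lemma cleared_cols_step:
  assumes m: "0 < m" and C: "C \<in> block_monomial m d" and cl: "cleared_cols (m * d) k p C"
    and k: "k < m * d"
  obtains L R q where "L \<in> B_blocks m d" "R \<in> B_blocks m d"
    "cleared_cols (m * d) (Suc k) (p(k := q)) (L * C * R)"
proof -
  let ?n = "m * d"
  obtain \<sigma> where \<sigma>: "\<sigma> permutes {..<d}" "block_pattern m ?n \<sigma> C" and CC: "C \<in> carrier_mat ?n ?n"
    and invC: "invertible_mat C"
    using C unfolding block_monomial_def by blast
  obtain q where q: "q < ?n" and Cqk: "C $$ (q, k) \<noteq> 0"
    and below: "\<forall>i<?n. q < i \<longrightarrow> C $$ (i, k) = 0"
    using invertible_mat_lowest_nonzero_in_col[OF CC invC k] by blast
  have pat: "i div m = \<sigma> (j div m)" if "i < ?n" "j < ?n" "C $$ (i, j) \<noteq> 0" for i j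
    using \<sigma>(2) that unfolding block_pattern_def by blast
  define a where "a = (\<lambda>i. if i < q then - (C $$ (i, k) / C $$ (q, k)) else 0)"
  define L where "L = row_add_mat ?n q a"
  define b where "b = (\<lambda>l. if k < l then - ((L * C) $$ (q, l) / (L * C) $$ (q, k)) else 0)"
  have LB: "L \<in> B_blocks m d" unfolding L_def
  proof (rule row_add_mat_B_blocks[OF q])
    fix i assume "i < ?n" "a i \<noteq> 0"
    then show "i < q \<and> i div m = q div m"
      using pat[OF _ k] pat[OF q k Cqk] by (auto simp: a_def split: if_splits)
  qed (simp add: a_def)
  have "block_pattern m ?n id L"
    using LB block_upper_imp_block_pattern_id unfolding B_blocks_iff by blast
  from block_pattern_mult[OF B_blocks_carrier[OF LB] CC this \<sigma>(2)]
  have LC_pat: "block_pattern m ?n \<sigma> (L * C)" by simp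
  have RB: "col_add_mat ?n k b \<in> B_blocks m d"
  proof (rule col_add_mat_B_blocks[OF k])
    fix l assume l: "l < ?n" "b l \<noteq> 0"
    then have "k < l" "(L * C) $$ (q, l) \<noteq> 0" by (auto simp: b_def split: if_splits)
    then have "\<sigma> (l div m) = \<sigma> (k div m)"
      using LC_pat l(1) q pat[OF q k Cqk] unfolding block_pattern_def by metis
    then show "k < l \<and> k div m = l div m"
      using \<open>k < l\<close> permutes_inj[OF \<sigma>(1)] by (metis injD)
  qed (simp add: b_def)
  have "cleared_cols ?n (Suc k) (p(k := q)) (L * C * col_add_mat ?n k b)"
    unfolding b_def L_def by (rule cleared_cols_Suc_by_clearing[OF CC cl k q Cqk below a_def refl])
  then show ?thesis using that LB RB by blast
qed

lemma block_monomial_B_equiv_cleared: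
  assumes m: "0 < m" and A: "A \<in> block_monomial m d"
  shows "k \<le> m * d \<Longrightarrow>
    \<exists>C p. C \<in> block_monomial m d \<and> B_equiv m d A C \<and> cleared_cols (m * d) k p C"
proof (induction k)
  case 0
  then show ?case
    using A B_equiv_refl[OF block_monomial_carrier[OF A]] by (auto simp: cleared_cols_def)
next
  case (Suc k)
  then obtain C p where C: "C \<in> block_monomial m d" "B_equiv m d A C" "cleared_cols (m * d) k p C"
    by auto
  obtain L R q where LR: "L \<in> B_blocks m d" "R \<in> B_blocks m d"
    and cl: "cleared_cols (m * d) (Suc k) (p(k := q)) (L * C * R)"
    using cleared_cols_step[OF m C(1,3)] Suc.prems by auto
  have "L * C * R \<in> block_monomial m d"
    using block_monomial_mult B_blocks_subset_block_monomial LR C(1) by blast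
  moreover have "B_equiv m d A (L * C * R)"
    using B_equiv_trans[OF C(2) B_equiv_mult[OF block_monomial_carrier[OF C(1)] LR]]
      block_monomial_carrier[OF calculation] .
  ultimately show ?case using cl by blast
qed

lemma cleared_cols_monomial_mat:
  assumes m: "0 < m" and C: "C \<in> block_monomial m d" and cl: "cleared_cols (m * d) (m * d) p C"
  obtains w where "w \<in> wreath m d" "monomial_mat (m * d) w C"
proof -
  let ?n = "m * d"
  obtain \<sigma> where \<sigma>: "\<sigma> permutes {..<d}" "block_pattern m ?n \<sigma> C" and CC: "C \<in> carrier_mat ?n ?n"
    using C unfolding block_monomial_def by blast
  have piv: "p j < ?n" "C $$ (p j, j) \<noteq> 0" "\<And>i. i < ?n \<Longrightarrow> i \<noteq> p j \<Longrightarrow> C $$ (i, j) = 0"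
    "\<And>l. l < ?n \<Longrightarrow> l \<noteq> j \<Longrightarrow> C $$ (p j, l) = 0" if "j < ?n" for j
    using cl that unfolding cleared_cols_def by blast+
  have "inj_on p {..<?n}"
    using piv by (intro inj_onI) (metis lessThan_iff)
  moreover have "p j < ?n \<and> p j div m = \<sigma> (j div m)" if "j < ?n" for j
    using \<sigma>(2) piv[OF that] that unfolding block_pattern_def by blast
  ultimately obtain w where w: "w \<in> wreath m d" "\<And>j. j < ?n \<Longrightarrow> w j = p j"
    using wreath_of_block_map[OF m \<sigma>(1)] by blast
  have "monomial_mat ?n w C"
    unfolding monomial_mat_def using CC piv w(2) by metis
  then show ?thesis using that w(1) by blast
qed

lemma block_monomial_subset_double_cosets:
  assumes "0 < m"
  shows "block_monomial m d \<subseteq> (\<Union>w \<in> wreath m d. double_coset m d w :: 'a::field mat set)"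
proof
  fix A :: "'a mat" assume "A \<in> block_monomial m d"
  then obtain C p where C: "C \<in> block_monomial m d" "B_equiv m d A C" "cleared_cols (m * d) (m * d) p C"
    using block_monomial_B_equiv_cleared[OF assms] by blast
  then obtain w where w: "w \<in> wreath m d" "monomial_mat (m * d) w C"
    using cleared_cols_monomial_mat[OF assms] by blast
  then have "A \<in> double_coset m d w" using C(2) unfolding double_coset_iff by blast
  then show "A \<in> (\<Union>w \<in> wreath m d. double_coset m d w)" using w(1) by blast
qed

theorem corollary2p7:
  assumes "m \<ge> 1" and "d \<ge> 1"
  shows "(G_wr m d :: 'a::field mat set) = (\<Union>w \<in> wreath m d. double_coset m d w)
     \<and> (\<forall>w \<in> wreath m d. \<forall>w' \<in> wreath m d. w \<noteq> w' \<longrightarrow>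
          double_coset m d w \<inter> (double_coset m d w' :: 'a mat set) = {})"
proof -
  have m: "0 < m" using assms(1) by simp
  have "G_wr m d \<subseteq> (\<Union>w \<in> wreath m d. double_coset m d w :: 'a mat set)"
    using G_wr_subset_block_monomial[OF m] block_monomial_subset_double_cosets[OF m] by blast
  moreover have "(\<Union>w \<in> wreath m d. double_coset m d w) \<subseteq> (G_wr m d :: 'a mat set)"
    using double_coset_subset_G_wr by blast
  moreover have "double_coset m d w \<inter> (double_coset m d w' :: 'a mat set) = {}"
    if "w \<in> wreath m d" "w' \<in> wreath m d" "w \<noteq> w'" for w w'
    using double_cosets_disjoint[OF m that(1,2)] that(3) by blast
  ultimately show ?thesis by blast
qed

end
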